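(* Let $f(1),f(2),\dots$ be a non-negative, non-decreasing sequence of real numbers with $$\sum_{n=1}^{\infty}\frac{f(n)}{n^2}=\infty.$$ Then there exists a sequence $b(1),b(2),\dots$ of rational numbers such that $$b(n+m)\le b(n)+b(m)+f(n+m)\quad\text{for all integers } n,m\ge 1,$$ and such that the map $n\mapsto b(n)/n$ is a bijection from the positive integers onto $\mathbb{Q}$, i.e. every rational number occurs exactly once among the values $b(n)/n$. *)

theory Defs
  imports "HOL-Analysis.Analysis"
begin

end

theory Submission
  imports Defs
begin

text \<open>
  Write \<open>b n = n * q n\<close>. It suffices to have
  \<open>q (N + 1) \<le> q N + f (N + 1) / (N + 1)\<^sup>2\<close>: since \<open>f\<close> is non-decreasing,
  \<open>\<Sum>j\<in>{n<..N}. f j / j\<^sup>2 \<le> f N * (1/n - 1/N)\<close>, so \<open>n * q N \<le> n * q n + f N * (1 - n/N)\<close>,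
  and adding this to the same bound for \<open>m = N - n\<close> gives the inequality for \<open>b\<close>.
  The sequence \<open>q\<close> is built greedily as an injective sequence of rationals obeying this
  bound: at each step take the first rational of a fixed enumeration not yet used if it
  lies below the bound, and otherwise an unused rational within \<open>2\<^sup>-\<^sup>N\<close> of the bound.
  If some rational \<open>r\<close> were never taken, then from some point on \<open>q\<close> stays below \<open>r\<close>
  while growing by at least \<open>f N / N\<^sup>2 - 2\<^sup>-\<^sup>N\<close> per step, which forces
  \<open>\<Sum> f N / N\<^sup>2 < \<infinity>\<close>.
\<close>

lemma sum_div_square_le:
  fixes f :: "nat \<Rightarrow> real"
  assumes nonneg: "\<And>n. n \<ge> 1 \<Longrightarrow> f n \<ge> 0"
    and mono: "\<And>n. n \<ge> 1 \<Longrightarrow> f n \<le> f (Suc n)"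
    and "1 \<le> n" "n \<le> N"
  shows "(\<Sum>j\<in>{n<..N}. f j / (real j)\<^sup>2) \<le> f N * (1 / real n - 1 / real N)"
  using \<open>n \<le> N\<close>
proof (induction N rule: dec_induct)
  case base
  then show ?case by simp
next
  case (step N)
  have "N \<ge> 1" using step.hyps \<open>1 \<le> n\<close> by simp
  have "1 / (real (Suc N))\<^sup>2 \<le> 1 / (real N * real (Suc N))"
    by (rule frac_le) (use \<open>N \<ge> 1\<close> in \<open>auto simp: power2_eq_square\<close>)
  also have "\<dots> = 1 / real N - 1 / real (Suc N)"
    using \<open>N \<ge> 1\<close> by (simp add: field_simps)
  finally have "f (Suc N) * (1 / (real (Suc N))\<^sup>2) \<le> f (Suc N) * (1 / real N - 1 / real (Suc N))"
    by (rule mult_left_mono) (simp add: nonneg)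
  then have last: "f (Suc N) / (real (Suc N))\<^sup>2 \<le> f (Suc N) * (1 / real N - 1 / real (Suc N))"
    by simp
  have "1 / real N \<le> 1 / real n"
    using step.hyps \<open>1 \<le> n\<close> by (simp add: frac_le)
  then have "f N * (1 / real n - 1 / real N) \<le> f (Suc N) * (1 / real n - 1 / real N)"
    using mono[OF \<open>N \<ge> 1\<close>] by (intro mult_right_mono) auto
  moreover have "{n<..Suc N} = insert (Suc N) {n<..N}"
    using step.hyps by auto
  ultimately show ?case
    using step.IH last by (simp add: algebra_simps)
qed

lemma le_add_sum_of_increments:
  fixes Q g :: "nat \<Rightarrow> real"
  assumes incr: "\<And>k. Q (Suc k) \<le> Q k + g (Suc k)" and "n \<le> N"
  shows "Q N \<le> Q n + (\<Sum>j\<in>{n<..N}. g j)"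
  using \<open>n \<le> N\<close>
proof (induction N rule: dec_induct)
  case (step N)
  have "{n<..Suc N} = insert (Suc N) {n<..N}"
    using step.hyps by auto
  then show ?case
    using step.IH incr[of N] by simp
qed simp

lemma weighted_subadditivity:
  fixes f Q :: "nat \<Rightarrow> real"
  assumes nonneg: "\<And>n. n \<ge> 1 \<Longrightarrow> f n \<ge> 0"
    and mono: "\<And>n. n \<ge> 1 \<Longrightarrow> f n \<le> f (Suc n)"
    and incr: "\<And>k. Q (Suc k) \<le> Q k + f (Suc k) / (real (Suc k))\<^sup>2"
    and "n \<ge> 1" "m \<ge> 1"
  shows "real (n + m) * Q (n + m) \<le> real n * Q n + real m * Q m + f (n + m)"
proof -
  define N where "N = n + m"
  have "real N > 0"
    using \<open>n \<ge> 1\<close> by (simp add: N_def)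
  have weighted: "real k * Q N \<le> real k * Q k + f N * (1 - real k / real N)"
    if "1 \<le> k" "k \<le> N" for k
  proof -
    have "Q N \<le> Q k + f N * (1 / real k - 1 / real N)"
      using le_add_sum_of_increments[of Q "\<lambda>j. f j / (real j)\<^sup>2", OF incr \<open>k \<le> N\<close>]
        sum_div_square_le[where f = f, OF nonneg mono that]
      by linarith
    then have "real k * Q N \<le> real k * (Q k + f N * (1 / real k - 1 / real N))"
      by (rule mult_left_mono) simp
    then show ?thesis
      using \<open>1 \<le> k\<close> by (simp add: algebra_simps)
  qed
  have "real N * Q N = real n * Q N + real m * Q N"
    by (simp add: N_def algebra_simps)
  also have "\<dots> \<le> (real n * Q n + f N * (1 - real n / real N))
                  + (real m * Q m + f N * (1 - real m / real N))"
    using weighted[of n] weighted[of m] \<open>n \<ge> 1\<close> \<open>m \<ge> 1\<close> by (simp add: N_def)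
  also have "\<dots> = real n * Q n + real m * Q m + f N * (2 - (real n / real N + real m / real N))"
    by (simp add: algebra_simps)
  also have "real n / real N + real m / real N = 1"
    using \<open>real N > 0\<close> by (simp add: N_def add_divide_distrib[symmetric])
  finally show ?thesis
    by (simp add: N_def)
qed

lemma summable_of_bounded_increments:
  fixes Q g e :: "nat \<Rightarrow> real"
  assumes g_nonneg: "\<And>n. 0 \<le> g n"
    and e: "summable e" "\<And>n. 0 \<le> e n"
    and grow: "\<And>n. n \<ge> N \<Longrightarrow> Q n + g n - e n \<le> Q (Suc n)"
    and bounded: "\<And>n. n \<ge> N \<Longrightarrow> Q n \<le> C"
  shows "summable g"
proof -
  have e_tail: "summable (\<lambda>i. e (i + N))"
    using e(1) by (simp add: summable_iff_shift)
  have "summable (\<lambda>i. g (i + N))"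
  proof (rule summableI_nonneg_bounded)
    fix M
    have "(\<Sum>i<M. g (i + N)) \<le> (\<Sum>i<M. Q (Suc i + N) - Q (i + N) + e (i + N))"
    proof (rule sum_mono)
      fix i
      show "g (i + N) \<le> Q (Suc i + N) - Q (i + N) + e (i + N)"
        using grow[of "i + N"] by simp
    qed
    also have "\<dots> = Q (M + N) - Q N + (\<Sum>i<M. e (i + N))"
      using sum_lessThan_telescope[of "\<lambda>i. Q (i + N)" M] by (simp add: sum.distrib)
    also have "\<dots> \<le> C - Q N + (\<Sum>i. e (i + N))"
      using bounded[of "M + N"] sum_le_suminf[OF e_tail, of "{..<M}"] e(2) by simp
    finally show "(\<Sum>i<M. g (i + N)) \<le> C - Q N + (\<Sum>i. e (i + N))" .
  qed (use g_nonneg in auto)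
  then show ?thesis
    by (simp add: summable_iff_shift)
qed

lemma exists_rat_avoiding_near:
  fixes B eps :: real and F :: "rat set"
  assumes "finite F" "eps > 0"
  shows "\<exists>x. x \<notin> F \<and> B - eps < real_of_rat x \<and> real_of_rat x \<le> B"
proof -
  define A where "A = insert (B - eps) (real_of_rat ` {y\<in>F. real_of_rat y < B})"
  have "finite A"
    using assms(1) by (simp add: A_def)
  have "Max A < B"
    using \<open>finite A\<close> assms(2) by (subst Max_less_iff) (auto simp: A_def)
  obtain z where "z \<in> \<rat>" "Max A < z" "z < B"
    using Rats_dense_in_real[OF \<open>Max A < B\<close>] by blast
  then obtain x where x: "z = real_of_rat x"
    by (auto elim: Rats_cases)
  have "x \<notin> F"
  proof
    assume "x \<in> F"
    then have "real_of_rat x \<in> A"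
      using \<open>z < B\<close> x by (simp add: A_def)
    then show False
      using Max_ge[OF \<open>finite A\<close>] \<open>Max A < z\<close> x by fastforce
  qed
  moreover have "B - eps \<le> Max A"
    using \<open>finite A\<close> by (simp add: A_def)
  ultimately show ?thesis
    using x \<open>Max A < z\<close> \<open>z < B\<close> by (intro exI[of _ x]) auto
qed

definition first_unused :: "rat set \<Rightarrow> rat" where
  "first_unused S = from_nat (LEAST k. from_nat k \<notin> S)"

lemma first_unused_notin:
  assumes "finite S"
  shows "first_unused S \<notin> S"
proof -
  obtain x :: rat where "x \<notin> S"
    using ex_new_if_finite[OF infinite_UNIV_char_0 assms] by blast
  then have "\<exists>k. (from_nat k :: rat) \<notin> S"
    by (metis from_nat_to_nat)
  then show ?thesis
    unfolding first_unused_def by (rule LeastI_ex)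
qed

lemma first_unused_eqI:
  assumes "from_nat k \<notin> S" "\<forall>j<k. from_nat j \<in> S"
  shows "first_unused S = from_nat k"
proof -
  have "(LEAST k. from_nat k \<notin> S) = k"
    using assms by (intro Least_equality) (auto simp: not_less[symmetric])
  then show ?thesis
    by (simp add: first_unused_def)
qed

definition greedy_step :: "real \<Rightarrow> real \<Rightarrow> rat set \<Rightarrow> rat" where
  "greedy_step B eps S =
     (if real_of_rat (first_unused S) \<le> B then first_unused S
      else (SOME x. x \<notin> S \<and> B - eps < real_of_rat x \<and> real_of_rat x \<le> B))"

lemma greedy_step_fallback:
  assumes "finite S" "eps > 0" "B < real_of_rat (first_unused S)"
  shows "greedy_step B eps S \<notin> S \<and> B - eps < real_of_rat (greedy_step B eps S)
           \<and> real_of_rat (greedy_step B eps S) \<le> B"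
  using someI_ex[OF exists_rat_avoiding_near[OF assms(1,2), of B]] assms(3)
  by (simp add: greedy_step_def)

lemma greedy_step_notin:
  assumes "finite S" "eps > 0"
  shows "greedy_step B eps S \<notin> S"
  using greedy_step_fallback[OF assms, of B] first_unused_notin[OF assms(1)]
  by (cases "real_of_rat (first_unused S) \<le> B") (auto simp: greedy_step_def)

lemma greedy_step_le:
  assumes "finite S" "eps > 0"
  shows "real_of_rat (greedy_step B eps S) \<le> B"
  using greedy_step_fallback[OF assms, of B]
  by (cases "real_of_rat (first_unused S) \<le> B") (auto simp: greedy_step_def)

text \<open>
  \<open>greedy_prefix g N\<close> lists \<open>q N, \<dots>, q 1\<close>. The bound for \<open>q 1\<close> refers to \<open>q 0 = hd []\<close>,
  an unspecified rational that plays no other role.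
\<close>

primrec greedy_prefix :: "(nat \<Rightarrow> real) \<Rightarrow> nat \<Rightarrow> rat list" where
  "greedy_prefix g 0 = []"
| "greedy_prefix g (Suc N) =
     greedy_step (real_of_rat (hd (greedy_prefix g N)) + g (Suc N)) ((1/2) ^ Suc N)
       (set (greedy_prefix g N)) # greedy_prefix g N"

definition greedy :: "(nat \<Rightarrow> real) \<Rightarrow> nat \<Rightarrow> rat" where
  "greedy g N = hd (greedy_prefix g N)"

lemma greedy_Suc:
  "greedy g (Suc N) =
     greedy_step (real_of_rat (greedy g N) + g (Suc N)) ((1/2) ^ Suc N) (set (greedy_prefix g N))"
  by (simp add: greedy_def)

lemma greedy_prefix_Suc: "greedy_prefix g (Suc N) = greedy g (Suc N) # greedy_prefix g N"
  by (simp add: greedy_def)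

declare greedy_prefix.simps(2) [simp del]

lemma set_greedy_prefix: "set (greedy_prefix g N) = greedy g ` {1..N}"
proof (induction N)
  case (Suc N)
  have "{1..Suc N} = insert (Suc N) {1..N}"
    by auto
  then show ?case
    using Suc by (simp add: greedy_prefix_Suc)
qed simp

lemma greedy_prefix_mono: "N \<le> M \<Longrightarrow> set (greedy_prefix g N) \<subseteq> set (greedy_prefix g M)"
  by (induction M rule: dec_induct) (auto simp: greedy_prefix_Suc)

lemma greedy_Suc_le: "real_of_rat (greedy g (Suc N)) \<le> real_of_rat (greedy g N) + g (Suc N)"
  unfolding greedy_Suc by (rule greedy_step_le) auto

lemma greedy_Suc_new: "greedy g (Suc N) \<notin> set (greedy_prefix g N)"
  unfolding greedy_Suc by (rule greedy_step_notin) auto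

lemma inj_on_greedy: "inj_on (greedy g) {1..}"
proof -
  have "greedy g i \<noteq> greedy g j" if "1 \<le> i" "i < j" for i j
  proof -
    have "greedy g i \<in> set (greedy_prefix g (j - 1))"
      using that by (auto simp: set_greedy_prefix)
    moreover have "greedy g j \<notin> set (greedy_prefix g (j - 1))"
      using greedy_Suc_new[of g "j - 1"] that by simp
    ultimately show ?thesis
      by metis
  qed
  then show ?thesis
    by (intro inj_onI) (metis atLeast_iff linorder_neqE_nat)
qed

lemma greedy_places_next:
  assumes g_nonneg: "\<And>n. 0 \<le> g (Suc n)"
    and diverge: "\<not> summable (\<lambda>n. g (Suc n))"
    and placed: "\<forall>j<k. from_nat j \<in> set (greedy_prefix g N0)"
  shows "\<exists>N. from_nat k \<in> set (greedy_prefix g N)"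
proof (rule ccontr)
  assume never: "\<nexists>N. from_nat k \<in> set (greedy_prefix g N)"
  define r :: rat where "r = from_nat k"
  define B where "B N = real_of_rat (greedy g N) + g (Suc N)" for N
  have first: "first_unused (set (greedy_prefix g N)) = r" if "N0 \<le> N" for N
    using never placed greedy_prefix_mono[OF that, of g] unfolding r_def
    by (intro first_unused_eqI) auto
  text \<open>Otherwise \<open>r\<close> itself would be chosen at step \<open>N + 1\<close>.\<close>
  have below: "B N < real_of_rat r" if "N0 \<le> N" for N
  proof (rule ccontr)
    assume "\<not> B N < real_of_rat r"
    then have "greedy g (Suc N) = r"
      using first[OF that] by (simp add: greedy_Suc greedy_step_def B_def)
    then show False
      using never greedy_prefix_Suc[of g N] unfolding r_def by (metis list.set_intros(1))
  qed
  have "summable (\<lambda>n. g (Suc n))"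
  proof (rule summable_of_bounded_increments)
    show "summable (\<lambda>n. (1/2::real) ^ Suc n)"
      using summable_geometric[of "1/2::real"] by (simp add: summable_Suc_iff)
    show "real_of_rat (greedy g n) + g (Suc n) - (1/2) ^ Suc n \<le> real_of_rat (greedy g (Suc n))"
      if "N0 \<le> n" for n
    proof -
      have "B n - (1/2) ^ Suc n < real_of_rat (greedy_step (B n) ((1/2) ^ Suc n) (set (greedy_prefix g n)))"
        using greedy_step_fallback[of _ "(1/2::real) ^ Suc n" "B n"] below[OF that] first[OF that]
        by simp
      then show ?thesis
        by (simp add: greedy_Suc B_def)
    qed
    show "real_of_rat (greedy g n) \<le> real_of_rat r" if "N0 \<le> n" for n
      using below[OF that] g_nonneg[of n] by (simp add: B_def)
  qed (use g_nonneg in auto)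
  with diverge show False ..
qed

lemma greedy_places_initial_segment:
  assumes "\<And>n. 0 \<le> g (Suc n)" "\<not> summable (\<lambda>n. g (Suc n))"
  shows "\<exists>N. \<forall>j<k. from_nat j \<in> set (greedy_prefix g N)"
proof (induction k)
  case (Suc k)
  then obtain N0 where N0: "\<forall>j<k. from_nat j \<in> set (greedy_prefix g N0)"
    by blast
  obtain N1 where N1: "from_nat k \<in> set (greedy_prefix g N1)"
    using greedy_places_next[OF assms N0] by blast
  have "\<forall>j<Suc k. from_nat j \<in> set (greedy_prefix g (max N0 N1))"
    using N0 N1 greedy_prefix_mono[of N0 "max N0 N1" g] greedy_prefix_mono[of N1 "max N0 N1" g]
    by (auto simp: less_Suc_eq)
  then show ?case
    by blast
qed simp

lemma greedy_surj:
  assumes "\<And>n. 0 \<le> g (Suc n)" "\<not> summable (\<lambda>n. g (Suc n))"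
  shows "greedy g ` {1..} = UNIV"
proof -
  have "x \<in> greedy g ` {1..}" for x :: rat
  proof -
    obtain N where "\<forall>j<Suc (to_nat x). from_nat j \<in> set (greedy_prefix g N)"
      using greedy_places_initial_segment[OF assms] by blast
    then have "x \<in> set (greedy_prefix g N)"
      by (metis from_nat_to_nat lessI)
    then show ?thesis
      by (auto simp: set_greedy_prefix)
  qed
  then show ?thesis
    by blast
qed

theorem theorem5p6:
  fixes f :: "nat \<Rightarrow> real"
  assumes nonneg: "\<And>n. n \<ge> 1 \<Longrightarrow> f n \<ge> 0"
    and mono: "\<And>n. n \<ge> 1 \<Longrightarrow> f n \<le> f (Suc n)"
    and diverge: "\<not> summable (\<lambda>n. f (Suc n) / (real (Suc n))\<^sup>2)"
  shows "\<exists>b :: nat \<Rightarrow> rat.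
           (\<forall>n m. n \<ge> 1 \<longrightarrow> m \<ge> 1 \<longrightarrow>
              real_of_rat (b (n + m)) \<le> real_of_rat (b n) + real_of_rat (b m) + f (n + m))
         \<and> bij_betw (\<lambda>n. b n / of_nat n) {1..} (UNIV :: rat set)"
proof -
  define q where "q = greedy (\<lambda>n. f n / (real n)\<^sup>2)"
  have "bij_betw q {1..} UNIV"
    unfolding q_def bij_betw_def
    using inj_on_greedy greedy_surj[of "\<lambda>n. f n / (real n)\<^sup>2"] nonneg diverge by simp
  then have bij: "bij_betw (\<lambda>n. of_nat n * q n / of_nat n) {1..} (UNIV :: rat set)"
    by (rule bij_betw_cong[THEN iffD1, rotated]) auto
  have incr: "real_of_rat (q (Suc k)) \<le> real_of_rat (q k) + f (Suc k) / (real (Suc k))\<^sup>2" for k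
    unfolding q_def by (rule greedy_Suc_le)
  have "real (n + m) * real_of_rat (q (n + m))
          \<le> real n * real_of_rat (q n) + real m * real_of_rat (q m) + f (n + m)"
    if "n \<ge> 1" "m \<ge> 1" for n m
    by (rule weighted_subadditivity[where f = f and Q = "\<lambda>k. real_of_rat (q k)", OF nonneg mono incr that])
  with bij show ?thesis
    by (intro exI[of _ "\<lambda>n. of_nat n * q n"]) (simp add: of_rat_mult of_rat_add)
qed

end
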